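(* Fix $\Delta>0$ and let $q=1-e^{-\lambda\Delta}$. In the $\mathrm{EDD}(\lambda)$ model with a global clock, the probability that a run of the protocol $\mathrm{CORE}(\Delta)$ is correct equals $\sum_{k=0}^{n}\frac{1}{k!}\,q^{\,n-k}(1-q)^k$.
   Context: Agents $i_0,i_1,\ldots,i_n$ share an accurate global clock and are connected by a complete reliable network; the delay of each message is an independent exponential random variable with parameter $\lambda$. At time $0$ the supervisor $i_0$ receives an external input. Protocol $\mathrm{CORE}(\Delta)$: at time $0$, $i_0$ sends a "trigger" message to each of $i_1,\ldots,i_n$ (with independent delays $e_1,\ldots,e_n$); upon receiving the trigger, agent $i_k$ waits until the global time is at least $\Delta$ and then performs its action $\alpha_k$ (so if the trigger arrives after time $\Delta$ it acts immediately on arrival). Letting $t_k$ be the time at which $i_k$ performs $\alpha_k$, a run is correct if $t_1\le t_2\le\cdots\le t_n<\infty$. *)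

theory Defs
  imports "HOL-Probability.Probability"
begin

text \<open>Action time of agent k under CORE(Delta): it waits for the trigger (arriving at
  time e k) and until global time Delta, hence acts at max Delta (e k).\<close>
definition core_time :: "real \<Rightarrow> (nat \<Rightarrow> real) \<Rightarrow> nat \<Rightarrow> real" where
  "core_time \<Delta> e k = max \<Delta> (e k)"

definition core_correct :: "real \<Rightarrow> nat \<Rightarrow> (nat \<Rightarrow> real) \<Rightarrow> bool" where
  "core_correct \<Delta> n e \<longleftrightarrow> (\<forall>i j. 1 \<le> i \<and> i \<le> j \<and> j \<le> n \<longrightarrow> core_time \<Delta> e i \<le> core_time \<Delta> e j)"

end

theory Submission
  imports Defs
begin

(* Write P m t for the probability that m agents act in
   order and none of them before time t. Integrating out the delay y of the first agent,
   the others must act in order and no earlier than max \<Delta> y, which gives a one-step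
   recursion for P. For t > \<Delta> it is solved by e^(-l m t) / m!: all triggers arrive after t
   and in increasing order. For t \<le> \<Delta> the first agent either acts at \<Delta> (probability q)
   or later, so P (m + 1) t = q P m t + (1 - q)^(m + 1) / (m + 1)!, which unrolls to the
   stated sum. *)

lemma pred_sorted_map:
  fixes f :: "'i \<Rightarrow> 'a \<Rightarrow> 'b::{linorder_topology, second_countable_topology}"
  assumes "\<And>i. i \<in> set xs \<Longrightarrow> f i \<in> borel_measurable M"
  shows "Measurable.pred M (\<lambda>\<omega>. sorted (map (\<lambda>i. f i \<omega>) xs))"
  using assms
  by (induction xs) (auto intro!: pred_intros_logic pred_intros_finite borel_measurable_le)

lemma sorted_map_upt_iff:
  "sorted (map f [m..<n]) \<longleftrightarrow> (\<forall>i j. m \<le> i \<longrightarrow> i \<le> j \<longrightarrow> j < n \<longrightarrow> f i \<le> f j)"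
proof -
  have "sorted (map f [m..<n])
      \<longleftrightarrow> (\<forall>i j. i \<le> j \<longrightarrow> j < n - m \<longrightarrow> f (m + i) \<le> f (m + j))"
    by (simp add: sorted_iff_nth_mono del: upt_Suc)
  also have "\<dots> \<longleftrightarrow> (\<forall>i j. m \<le> i \<longrightarrow> i \<le> j \<longrightarrow> j < n \<longrightarrow> f i \<le> f j)"
  proof safe
    fix i j
    assume shifted: "\<forall>i j. i \<le> j \<longrightarrow> j < n - m \<longrightarrow> f (m + i) \<le> f (m + j)"
      and "m \<le> i" "i \<le> j" "j < n"
    then have "i - m \<le> j - m" "j - m < n - m"
      by linarith+
    then have "f (m + (i - m)) \<le> f (m + (j - m))"
      using shifted by blast
    then show "f i \<le> f j"
      using \<open>m \<le> i\<close> \<open>i \<le> j\<close> by simp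
  qed auto
  finally show ?thesis .
qed

lemma emeasure_exponential_density_greaterThan:
  assumes "0 < l" "0 \<le> a"
  shows "emeasure (density lborel (exponential_density l)) {a<..} = exp (- l * a)"
proof -
  let ?D = "density lborel (exponential_density l)"
  interpret prob_space ?D
    using prob_space_exponential_density[OF \<open>0 < l\<close>] .
  have "emeasure ?D {a<..} = emeasure ?D (space ?D - {..a})"
    by (auto intro: arg_cong[where f="emeasure ?D"])
  also have "\<dots> = 1 - emeasure ?D {..a}"
    using emeasure_space_1 by (subst emeasure_compl) auto
  also have "\<dots> = exp (- l * a)"
    using assms
    by (simp add: emeasure_erlang_density erlang_CDF_0 ennreal_minus flip: ennreal_1)
  finally show ?thesis .
qed

lemma emeasure_exponential_density_atLeast:
  assumes "0 < l" "0 \<le> a"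
  shows "emeasure (density lborel (exponential_density l)) {a..} = exp (- l * a)"
proof -
  have "AE x in density lborel (exponential_density l). x \<in> {a..} \<longleftrightarrow> x \<in> {a<..}"
    using AE_lborel_singleton[of a] by (subst AE_density) auto
  then show ?thesis
    using assms
    by (simp add: emeasure_eq_AE[where A="{a..}" and B="{a<..}"]
        emeasure_exponential_density_greaterThan)
qed

lemma exponential_density_mult_exp:
  assumes "0 < l" "0 \<le> k"
  shows "exponential_density l y * exp (- l * k * y)
       = exponential_density (l * (k + 1)) y / (k + 1)"
  using assms by (simp add: exponential_density_def exp_add[symmetric] field_simps)

lemma nn_integral_exp_exponential_density:
  assumes "0 < l" "0 \<le> k" and [measurable]: "S \<in> sets borel"
  shows "(\<integral>\<^sup>+y. ennreal (exp (- l * k * y)) * indicator S y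
            \<partial>density lborel (exponential_density l))
       = ennreal (1 / (k + 1)) * emeasure (density lborel (exponential_density (l * (k + 1)))) S"
proof -
  have "(\<integral>\<^sup>+y. ennreal (exp (- l * k * y)) * indicator S y
            \<partial>density lborel (exponential_density l))
      = (\<integral>\<^sup>+y. ennreal (1 / (k + 1))
            * (ennreal (exponential_density (l * (k + 1)) y) * indicator S y) \<partial>lborel)"
    using assms
    by (auto simp: nn_integral_density exponential_density_nonneg ennreal_mult'[symmetric]
        exponential_density_mult_exp[symmetric] mult_ac intro!: nn_integral_cong
        split: split_indicator)
  also have "\<dots> = ennreal (1 / (k + 1))
      * emeasure (density lborel (exponential_density (l * (k + 1)))) S"
    by (simp add: nn_integral_cmult emeasure_density)
  finally show ?thesis .
qed

lemma (in prob_space) distr_iid_eq_PiM: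
  assumes "I \<noteq> {}" and "indep_vars (\<lambda>_. borel) X I"
    and distributed: "\<And>i. i \<in> I \<Longrightarrow> distributed M lborel (X i) f"
  shows "distr M (PiM I (\<lambda>_. density lborel f)) (\<lambda>\<omega>. \<lambda>i\<in>I. X i \<omega>)
       = PiM I (\<lambda>_. density lborel f)"
proof -
  have X_borel: "random_variable borel (X i)" if "i \<in> I" for i
    using distributed_measurable[OF distributed[OF that]] by simp
  have marginal: "distr M borel (X i) = density lborel f" if "i \<in> I" for i
  proof -
    have "distr M borel (X i) = distr M lborel (X i)"
      by (rule distr_cong) simp_all
    then show ?thesis
      using distributed_distr_eq_density[OF distributed[OF that]] by simp
  qed
  have "distr M (PiM I (\<lambda>_. density lborel f)) (\<lambda>\<omega>. \<lambda>i\<in>I. X i \<omega>)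
      = distr M (PiM I (\<lambda>_. borel)) (\<lambda>\<omega>. \<lambda>i\<in>I. X i \<omega>)"
    by (rule distr_cong) (auto intro!: sets_PiM_cong)
  also have "\<dots> = PiM I (\<lambda>i. distr M borel (X i))"
    using indep_vars_iff_distr_eq_PiM'[where M'="\<lambda>_. borel" and X=X, OF assms(1) X_borel]
      assms(2)
    by blast
  also have "\<dots> = PiM I (\<lambda>_. density lborel f)"
    by (intro PiM_cong) (auto simp: marginal)
  finally show ?thesis .
qed

lemma (in prob_space) measure_iid_eq_PiM:
  assumes "indep_vars (\<lambda>_. borel) X I"
    and distributed: "\<And>i. i \<in> I \<Longrightarrow> distributed M lborel (X i) f"
    and "Measurable.pred (PiM I (\<lambda>_. density lborel f)) P"
  shows "measure M {\<omega> \<in> space M. P (\<lambda>i\<in>I. X i \<omega>)}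
       = measure (PiM I (\<lambda>_. density lborel f))
           {x \<in> space (PiM I (\<lambda>_. density lborel f)). P x}"
proof (cases "I = {}")
  case True
  have "{x \<in> space (PiM I (\<lambda>_. density lborel f)). P x}
      = (if P (\<lambda>_. undefined) then {\<lambda>_. undefined} else {})"
    using True by (auto simp: PiM_empty)
  moreover have "{\<omega> \<in> space M. P (\<lambda>i\<in>I. X i \<omega>)}
      = (if P (\<lambda>_. undefined) then space M else {})"
    using True by (auto simp: restrict_def)
  ultimately show ?thesis
    using True by (simp add: PiM_empty prob_space)
next
  case False
  let ?P = "PiM I (\<lambda>_. density lborel f)"
  have X: "(\<lambda>\<omega>. \<lambda>i\<in>I. X i \<omega>) \<in> M \<rightarrow>\<^sub>M ?P"
    using distributed_measurable[OF distributed] by (intro measurable_restrict) simp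
  have "{\<omega> \<in> space M. P (\<lambda>i\<in>I. X i \<omega>)}
      = (\<lambda>\<omega>. \<lambda>i\<in>I. X i \<omega>) -` {x \<in> space ?P. P x} \<inter> space M"
    using measurable_space[OF X] by auto
  then show ?thesis
    using measure_distr[OF X assms(3)[unfolded pred_def]]
      distr_iid_eq_PiM[OF False assms(1) distributed]
    by simp
qed

lemma core_correct_iff_sorted:
  "core_correct \<Delta> n e \<longleftrightarrow> sorted (\<Delta> # map (core_time \<Delta> e) [1..<Suc n])"
proof -
  have "\<forall>t \<in> set (map (core_time \<Delta> e) [1..<Suc n]). \<Delta> \<le> t"
    by (auto simp: core_time_def)
  then show ?thesis
    unfolding core_correct_def sorted_simps(2) sorted_map_upt_iff less_Suc_eq_le
    by blast
qed

locale core_protocol =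
  fixes l \<Delta> :: real
  assumes rate_pos: "0 < l" and deadline_pos: "0 < \<Delta>"
begin

abbreviation delay :: "real measure" where
  "delay \<equiv> density lborel (exponential_density l)"

lemma product_sigma_finite_delay: "product_sigma_finite (\<lambda>_. delay)"
  using prob_space_exponential_density[OF rate_pos]
  by (simp add: product_sigma_finite_def prob_space_imp_sigma_finite)

definition q :: real where
  "q = 1 - exp (- l * \<Delta>)"

definition correct_prob :: "nat \<Rightarrow> real" where
  "correct_prob n = (\<Sum>k=0..n. 1 / fact k * q ^ (n - k) * (1 - q) ^ k)"

definition ordered_prob :: "nat \<Rightarrow> real \<Rightarrow> real" where
  "ordered_prob m t = (if t \<le> \<Delta> then correct_prob m else exp (- l * m * t) / fact m)"

lemma q_bounds: "0 \<le> q" "q \<le> 1"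
  using rate_pos deadline_pos by (auto simp: q_def)

lemma correct_prob_nonneg: "0 \<le> correct_prob n"
  unfolding correct_prob_def using q_bounds by (intro sum_nonneg) auto

lemma ordered_prob_nonneg: "0 \<le> ordered_prob m t"
  by (simp add: ordered_prob_def correct_prob_nonneg)

lemma correct_prob_Suc:
  "correct_prob (Suc n) = q * correct_prob n + (1 - q) ^ Suc n / fact (Suc n)"
proof -
  have "(\<Sum>k=0..n. 1 / fact k * q ^ (Suc n - k) * (1 - q) ^ k) = q * correct_prob n"
    unfolding correct_prob_def sum_distrib_left by (intro sum.cong) (auto simp: Suc_diff_le)
  then show ?thesis
    by (simp add: correct_prob_def)
qed

lemma emeasure_delay_atMost: "emeasure delay {..\<Delta>} = q"
  using deadline_pos by (simp add: emeasure_erlang_density[OF rate_pos] erlang_CDF_0 q_def)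

lemma nn_integral_delay_tail:
  assumes "0 \<le> s" and "S = {s..} \<or> S = {s<..}"
  shows "(\<integral>\<^sup>+y. ennreal (exp (- l * m * y) / fact m) * indicator S y \<partial>delay)
       = exp (- l * Suc m * s) / fact (Suc m)"
proof -
  have S_borel: "S \<in> sets borel"
    using assms(2) by auto
  have tail: "emeasure (density lborel (exponential_density (l * (m + 1)))) S
      = exp (- l * (m + 1) * s)"
    using assms rate_pos
    by (auto simp: emeasure_exponential_density_atLeast
        emeasure_exponential_density_greaterThan mult.assoc)
  have "(\<integral>\<^sup>+y. ennreal (exp (- l * m * y) / fact m) * indicator S y \<partial>delay)
      = ennreal (1 / fact m) * (\<integral>\<^sup>+y. ennreal (exp (- l * m * y)) * indicator S y \<partial>delay)"
    using assms
    by (subst nn_integral_cmult[symmetric]) (auto simp: ennreal_mult'' mult_ac divide_inverse)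
  also have "\<dots> = ennreal (1 / fact m) * (ennreal (1 / (m + 1)) * exp (- l * (m + 1) * s))"
    using nn_integral_exp_exponential_density[OF rate_pos _ S_borel, of m] tail
    by (simp add: ac_simps)
  also have "\<dots> = exp (- l * Suc m * s) / fact (Suc m)"
    by (simp add: ennreal_mult''[symmetric] field_simps)
  finally show ?thesis .
qed

lemma nn_integral_ordered_prob:
  "(\<integral>\<^sup>+y. (if t \<le> max \<Delta> y then ennreal (ordered_prob m (max \<Delta> y)) else 0) \<partial>delay)
     = ordered_prob (Suc m) t"
proof (cases "t \<le> \<Delta>")
  case True
  have "(\<integral>\<^sup>+y. (if t \<le> max \<Delta> y then ennreal (ordered_prob m (max \<Delta> y)) else 0) \<partial>delay)
      = (\<integral>\<^sup>+y. ennreal (correct_prob m) * indicator {..\<Delta>} y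
            + ennreal (exp (- l * m * y) / fact m) * indicator {\<Delta><..} y \<partial>delay)"
    using True by (intro nn_integral_cong) (auto simp: ordered_prob_def split: split_indicator)
  also have "\<dots> = ennreal (correct_prob m) * q + exp (- l * Suc m * \<Delta>) / fact (Suc m)"
    using nn_integral_delay_tail[of \<Delta> "{\<Delta><..}" m] deadline_pos
    by (subst nn_integral_add) (auto simp: nn_integral_cmult_indicator emeasure_delay_atMost)
  also have "exp (- l * Suc m * \<Delta>) = (1 - q) ^ Suc m"
    by (simp add: q_def flip: exp_of_nat_mult) (simp add: algebra_simps flip: exp_add)
  finally show ?thesis
    using True correct_prob_nonneg q_bounds
    by (simp add: ordered_prob_def correct_prob_Suc ennreal_mult'' ennreal_plus mult.commute)
next
  case False
  have "(\<integral>\<^sup>+y. (if t \<le> max \<Delta> y then ennreal (ordered_prob m (max \<Delta> y)) else 0) \<partial>delay)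
      = (\<integral>\<^sup>+y. ennreal (exp (- l * m * y) / fact m) * indicator {t..} y \<partial>delay)"
    using False by (intro nn_integral_cong) (auto simp: ordered_prob_def split: split_indicator)
  also have "\<dots> = exp (- l * Suc m * t) / fact (Suc m)"
    using False deadline_pos by (intro nn_integral_delay_tail) auto
  finally show ?thesis
    using False by (simp add: ordered_prob_def)
qed

lemma pred_sorted_core_times:
  assumes "set xs \<subseteq> I"
  shows "Measurable.pred (PiM I (\<lambda>_. delay)) (\<lambda>x. sorted (t # map (core_time \<Delta> x) xs))"
proof -
  have [measurable]: "(\<lambda>x. core_time \<Delta> x i) \<in> borel_measurable (PiM I (\<lambda>_. delay))"
    if "i \<in> I" for i
    using that unfolding core_time_def by measurable
  have "Measurable.pred (PiM I (\<lambda>_. delay)) (\<lambda>x. sorted (map (\<lambda>i. core_time \<Delta> x i) xs))"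
    using assms by (intro pred_sorted_map) auto
  then show ?thesis
    using assms by (auto intro!: pred_intros_logic pred_intros_finite)
qed

lemma nn_integral_sorted_core_times:
  assumes "distinct xs"
  shows "(\<integral>\<^sup>+x. indicator {x. sorted (t # map (core_time \<Delta> x) xs)} x \<partial>PiM (set xs) (\<lambda>_. delay))
       = ordered_prob (length xs) t"
  using assms
proof (induction xs arbitrary: t)
  case Nil
  then show ?case
    by (simp add: PiM_empty ordered_prob_def correct_prob_def)
next
  case (Cons a xs)
  then have "a \<notin> set xs" and "distinct xs"
    by auto
  have indicator_upd: "indicator {x. sorted (t # map (core_time \<Delta> x) (a # xs))} (x(a := y))
      = (if t \<le> max \<Delta> y
         then indicator {x. sorted (max \<Delta> y # map (core_time \<Delta> x) xs)} x else 0)"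
    for x y
  proof -
    have "core_time \<Delta> (x(a := y)) a = max \<Delta> y"
      by (simp add: core_time_def)
    moreover have "map (core_time \<Delta> (x(a := y))) xs = map (core_time \<Delta> x) xs"
      using \<open>a \<notin> set xs\<close> by (intro map_cong) (auto simp: core_time_def)
    ultimately show ?thesis
      by (simp only: indicator_def mem_Collect_eq list.map sorted2) simp
  qed
  have inner: "(\<integral>\<^sup>+x. indicator {x. sorted (t # map (core_time \<Delta> x) (a # xs))} (x(a := y))
        \<partial>PiM (set xs) (\<lambda>_. delay))
      = (if t \<le> max \<Delta> y then ennreal (ordered_prob (length xs) (max \<Delta> y)) else 0)" for y
    unfolding indicator_upd
    by (cases "t \<le> max \<Delta> y")
      (simp_all only: if_True if_False Cons.IH[OF \<open>distinct xs\<close>] nn_integral_const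
        mult_zero_left)
  have measurable: "indicator {x. sorted (t # map (core_time \<Delta> x) (a # xs))}
      \<in> borel_measurable (PiM (insert a (set xs)) (\<lambda>_. delay))"
    using pred_sorted_core_times[of "a # xs" "insert a (set xs)" t]
    by (simp add: borel_measurable_indicator_iff pred_def Int_def conj_commute)
  have "(\<integral>\<^sup>+x. indicator {x. sorted (t # map (core_time \<Delta> x) (a # xs))} x
          \<partial>PiM (set (a # xs)) (\<lambda>_. delay))
      = (\<integral>\<^sup>+y. \<integral>\<^sup>+x. indicator {x. sorted (t # map (core_time \<Delta> x) (a # xs))} (x(a := y))
            \<partial>PiM (set xs) (\<lambda>_. delay) \<partial>delay)"
    unfolding list.set(2)
    by (rule product_sigma_finite.product_nn_integral_insert_rev
        [OF product_sigma_finite_delay _ _ measurable])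
      (use \<open>a \<notin> set xs\<close> in auto)
  also have "\<dots> = (\<integral>\<^sup>+y. (if t \<le> max \<Delta> y then ennreal (ordered_prob (length xs) (max \<Delta> y))
                         else 0) \<partial>delay)"
    by (simp only: inner)
  also have "\<dots> = ordered_prob (length (a # xs)) t"
    by (simp add: nn_integral_ordered_prob)
  finally show ?case .
qed

lemma measure_sorted_core_times:
  assumes "distinct xs"
  shows "measure (PiM (set xs) (\<lambda>_. delay))
           {x \<in> space (PiM (set xs) (\<lambda>_. delay)). sorted (t # map (core_time \<Delta> x) xs)}
       = ordered_prob (length xs) t"
proof -
  let ?P = "PiM (set xs) (\<lambda>_. delay)"
  let ?E = "{x \<in> space ?P. sorted (t # map (core_time \<Delta> x) xs)}"
  have "?E \<in> sets ?P"
    using pred_sorted_core_times[of xs "set xs" t] by (simp only: pred_def order_refl)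
  then have "emeasure ?P ?E = (\<integral>\<^sup>+x. indicator ?E x \<partial>?P)"
    by (rule nn_integral_indicator[symmetric])
  also have "\<dots> = (\<integral>\<^sup>+x. indicator {x. sorted (t # map (core_time \<Delta> x) xs)} x \<partial>?P)"
    by (intro nn_integral_cong) (simp add: indicator_def)
  also have "\<dots> = ordered_prob (length xs) t"
    by (rule nn_integral_sorted_core_times[OF assms])
  finally show ?thesis
    by (simp add: measure_def ordered_prob_nonneg)
qed

lemma pred_core_correct: "Measurable.pred (PiM {1..n} (\<lambda>_. delay)) (core_correct \<Delta> n)"
  unfolding core_correct_iff_sorted[abs_def]
  by (rule pred_sorted_core_times) (simp only: set_upt atLeastLessThanSuc_atLeastAtMost order_refl)

lemma measure_PiM_core_correct:
  "measure (PiM {1..n} (\<lambda>_. delay)) {x \<in> space (PiM {1..n} (\<lambda>_. delay)). core_correct \<Delta> n x}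
     = correct_prob n"
proof -
  have agents: "set [1..<Suc n] = {1..n}"
    by (simp only: set_upt atLeastLessThanSuc_atLeastAtMost)
  have "measure (PiM {1..n} (\<lambda>_. delay))
          {x \<in> space (PiM {1..n} (\<lambda>_. delay)). core_correct \<Delta> n x}
      = ordered_prob n \<Delta>"
    using measure_sorted_core_times[OF distinct_upt, of 1 "Suc n" \<Delta>]
    by (simp only: core_correct_iff_sorted agents length_upt diff_Suc_1)
  then show ?thesis
    by (simp add: ordered_prob_def)
qed

end

theorem theorem2:
  fixes M :: "'a measure" and e :: "nat \<Rightarrow> 'a \<Rightarrow> real"
    and l \<Delta> :: real and n :: nat
  assumes "prob_space M"
    and "l > 0" and "\<Delta> > 0"
    and "prob_space.indep_vars M (\<lambda>_. borel) e {1..n}"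
    and "\<And>k. k \<in> {1..n} \<Longrightarrow> distributed M lborel (e k) (exponential_density l)"
  shows "measure M {\<omega> \<in> space M. core_correct \<Delta> n (\<lambda>k. e k \<omega>)}
         = (\<Sum>k=0..n. (1 / fact k) * (1 - exp (- l * \<Delta>)) ^ (n - k) * (exp (- l * \<Delta>)) ^ k)"
proof -
  interpret prob_space M by fact
  interpret core_protocol l \<Delta> using assms(2,3) by unfold_locales
  have "core_correct \<Delta> n (\<lambda>k. e k \<omega>) \<longleftrightarrow> core_correct \<Delta> n (\<lambda>k\<in>{1..n}. e k \<omega>)" for \<omega>
    by (simp add: core_correct_def core_time_def)
  then have "measure M {\<omega> \<in> space M. core_correct \<Delta> n (\<lambda>k. e k \<omega>)}
      = measure (PiM {1..n} (\<lambda>_. delay))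
          {x \<in> space (PiM {1..n} (\<lambda>_. delay)). core_correct \<Delta> n x}"
    using measure_iid_eq_PiM[OF assms(4,5) pred_core_correct] by simp
  also have "\<dots> = correct_prob n"
    by (rule measure_PiM_core_correct)
  finally show ?thesis
    unfolding correct_prob_def q_def diff_diff_eq2 add_diff_cancel_left' .
qed

end
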